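(* Let $X$ and $Y$ be Banach spaces such that $X$ coarsely Lipschitz embeds into $Y$. Then $\mathcal F(X)$ is crudely finitely representable in $\mathcal F(Y)$.
   Context: $X$ coarsely Lipschitz embeds into $Y$ if there are a map $f\colon X\to Y$ and constants $A,B>0$, $C\geq 0$ such that $A\|x-y\|-C\leq\|f(x)-f(y)\|\leq B\|x-y\|+C$ for all $x,y\in X$. A Banach space $E_0$ is crudely finitely representable in a Banach space $W$ if there is $\lambda\geq1$ such that for every finite-dimensional subspace $E$ of $E_0$ and every $\varepsilon>0$ there is a finite-dimensional subspace $F$ of $W$ with Banach–Mazur distance $d(E,F)\leq\lambda+\varepsilon$. For a Banach space $Z$ (pointed at $0$), $\mathrm{Lip}_0(Z)$ is the Banach space of real Lipschitz functions vanishing at $0$ normed by the Lipschitz constant, and $\mathcal F(Z)=\overline{\mathrm{span}}\{\delta(x):x\in Z\}\subset\mathrm{Lip}_0(Z)^*$, $\delta(x)$ being evaluation at $x$. *)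

theory Defs
  imports "HOL-Analysis.Analysis"
begin

definition coarse_lipschitz_embeds :: "'a::real_normed_vector itself \<Rightarrow> 'b::real_normed_vector itself \<Rightarrow> bool" where
  "coarse_lipschitz_embeds _ _ \<longleftrightarrow>
     (\<exists>(f::'a \<Rightarrow> 'b) A B C. A > 0 \<and> B > 0 \<and> C \<ge> 0 \<and>
        (\<forall>x y. A * norm (x - y) - C \<le> norm (f x - f y) \<and> norm (f x - f y) \<le> B * norm (x - y) + C))"

definition Lip0 :: "('a::real_normed_vector \<Rightarrow> real) set" where
  "Lip0 = {g. (\<exists>L. lipschitz_on L UNIV g) \<and> g 0 = 0}"

definition Lip0_ball :: "('a::real_normed_vector \<Rightarrow> real) set" where
  "Lip0_ball = {g. lipschitz_on 1 UNIV g \<and> g 0 = 0}"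

text \<open>Elements of the dual Lip_0(Z)^* are represented as functionals on 'a \<Rightarrow> real that are
  linear on Lip_0(Z) and vanish outside Lip_0(Z) (so that the representation is unique).\<close>
definition dnorm :: "(('a::real_normed_vector \<Rightarrow> real) \<Rightarrow> real) \<Rightarrow> real" where
  "dnorm \<phi> = Sup {\<bar>\<phi> g\<bar> | g. g \<in> (Lip0_ball :: ('a \<Rightarrow> real) set)}"

definition dual_Lip0 :: "(('a::real_normed_vector \<Rightarrow> real) \<Rightarrow> real) set" where
  "dual_Lip0 = {\<phi>. (\<forall>g. g \<notin> (Lip0 :: ('a \<Rightarrow> real) set) \<longrightarrow> \<phi> g = 0) \<and>
      (\<forall>g\<in>Lip0. \<forall>h\<in>Lip0. \<forall>c a::real. \<phi> (\<lambda>x. c * g x + a * h x) = c * \<phi> g + a * \<phi> h) \<and>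
      bdd_above {\<bar>\<phi> g\<bar> | g. g \<in> (Lip0_ball :: ('a \<Rightarrow> real) set)}}"

definition dirac :: "'a::real_normed_vector \<Rightarrow> (('a \<Rightarrow> real) \<Rightarrow> real)" where
  "dirac x = (\<lambda>g. if g \<in> Lip0 then g x else 0)"

definition fadd :: "('c \<Rightarrow> real) \<Rightarrow> ('c \<Rightarrow> real) \<Rightarrow> ('c \<Rightarrow> real)" where
  "fadd \<phi> \<psi> = (\<lambda>g. \<phi> g + \<psi> g)"
definition fscale :: "real \<Rightarrow> ('c \<Rightarrow> real) \<Rightarrow> ('c \<Rightarrow> real)" where
  "fscale c \<phi> = (\<lambda>g. c * \<phi> g)"

definition fspan :: "('c \<Rightarrow> real) set \<Rightarrow> ('c \<Rightarrow> real) set" where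
  "fspan S = {(\<lambda>g. \<Sum>i<n. a i * v i g) | (n::nat) a v. \<forall>i<n. v i \<in> S}"

text \<open>The Lipschitz-free space F(Z): closure in Lip_0(Z)^* of span of the Diracs.\<close>
definition free_space :: "'a::real_normed_vector itself \<Rightarrow> (('a \<Rightarrow> real) \<Rightarrow> real) set" where
  "free_space _ = {\<phi> \<in> dual_Lip0. \<forall>e>0. \<exists>\<psi>\<in>fspan (range (dirac :: 'a \<Rightarrow> _)).
                       dnorm (\<lambda>g. \<phi> g - \<psi> g) < e}"

definition fd_subspace_of :: "(('a::real_normed_vector \<Rightarrow> real) \<Rightarrow> real) set \<Rightarrow> (('a \<Rightarrow> real) \<Rightarrow> real) set \<Rightarrow> bool" where
  "fd_subspace_of E W \<longleftrightarrow> E \<subseteq> W \<and> (\<exists>B. finite B \<and> E = fspan B)"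

definition linear_on_set :: "('c \<Rightarrow> real) set \<Rightarrow> (('c \<Rightarrow> real) \<Rightarrow> ('d \<Rightarrow> real)) \<Rightarrow> bool" where
  "linear_on_set E T \<longleftrightarrow> (\<forall>u\<in>E. \<forall>v\<in>E. \<forall>c a. T (fadd (fscale c u) (fscale a v)) = fadd (fscale c (T u)) (fscale a (T v)))"

definition op_norm_on :: "(('a::real_normed_vector \<Rightarrow> real) \<Rightarrow> real) set \<Rightarrow>
   ((('a \<Rightarrow> real) \<Rightarrow> real) \<Rightarrow> (('b::real_normed_vector \<Rightarrow> real) \<Rightarrow> real)) \<Rightarrow> real" where
  "op_norm_on E T = Sup {dnorm (T e) | e. e \<in> E \<and> dnorm e \<le> 1}"

text \<open>Banach--Mazur distance: infimum of norm(T) times norm(T inverse) over linear isomorphisms E \<rightarrow> F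
  (= \<infinity> if there is none).\<close>
definition bm_dist :: "(('a::real_normed_vector \<Rightarrow> real) \<Rightarrow> real) set \<Rightarrow> (('b::real_normed_vector \<Rightarrow> real) \<Rightarrow> real) set \<Rightarrow> ereal" where
  "bm_dist E F = Inf {ereal (op_norm_on E T * op_norm_on F S) | T S.
      linear_on_set E T \<and> linear_on_set F S \<and> T ` E \<subseteq> F \<and> S ` F \<subseteq> E \<and>
      (\<forall>e\<in>E. S (T e) = e) \<and> (\<forall>f\<in>F. T (S f) = f)}"

definition crudely_fin_rep :: "(('a::real_normed_vector \<Rightarrow> real) \<Rightarrow> real) set \<Rightarrow> (('b::real_normed_vector \<Rightarrow> real) \<Rightarrow> real) set \<Rightarrow> bool" where
  "crudely_fin_rep E0 W \<longleftrightarrow> (\<exists>lam\<ge>1. \<forall>E. fd_subspace_of E E0 \<longrightarrow>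
      (\<forall>\<epsilon>>0. \<exists>F. fd_subspace_of F W \<and> bm_dist E F \<le> ereal (lam + \<epsilon>)))"

end

theory Submission
  imports Defs
begin

(*
  A finite-dimensional subspace E of F(X) is spanned by finitely many elements of F(X), and a
  Gram-Schmidt type induction provides coordinate functionals on E that are linear and bounded
  for the dual norm. Approximating each spanning element by a finite combination of Dirac
  measures therefore replaces every e in E, up to a relative error s, by a combination
  sum_k c_k(e) delta(x_k) over one fixed finite set of points, with coefficients linear in e.
  On a finite set the additive constant of a coarse Lipschitz embedding f becomes negligible
  after rescaling x |-> f(t x) / t with t large, which yields a map phi with phi 0 = 0 that is
  bi-Lipschitz on the points with constants A - s and B + s. By McShane extension of Lipschitz
  functions from finite sets, pushing finitely supported elements forward along phi changes the
  dual norm by at most these factors. So e |-> sum_k c_k(e) delta(phi x_k) maps E isomorphically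
  onto a finite-dimensional subspace of F(Y) with Banach-Mazur distortion at most
  (B + s)(1 + s) / ((A - s)(1 - s)), which tends to B / A as s tends to 0.
*)

lemma Lip0_ball_subset_Lip0: "Lip0_ball \<subseteq> Lip0"
  by (auto simp: Lip0_ball_def Lip0_def)

lemma zero_in_Lip0_ball: "(\<lambda>x. 0) \<in> Lip0_ball"
  by (auto simp: Lip0_ball_def lipschitz_on_def)

lemma Lip0_lincomb:
  assumes "g \<in> Lip0" "h \<in> Lip0"
  shows "(\<lambda>x. c * g x + a * h x) \<in> Lip0"
proof -
  obtain L1 L2 where "L1-lipschitz_on UNIV g" "L2-lipschitz_on UNIV h" "g 0 = 0" "h 0 = 0"
    using assms by (auto simp: Lip0_def)
  then have "(\<bar>c\<bar> * L1 + \<bar>a\<bar> * L2)-lipschitz_on UNIV (\<lambda>x. c * g x + a * h x)"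
    by (intro lipschitz_intros)
  with \<open>g 0 = 0\<close> \<open>h 0 = 0\<close> show ?thesis
    by (auto simp: Lip0_def)
qed

lemma dual_Lip0_lincomb:
  "\<phi> \<in> dual_Lip0 \<Longrightarrow> g \<in> Lip0 \<Longrightarrow> h \<in> Lip0 \<Longrightarrow> \<phi> (\<lambda>x. c * g x + a * h x) = c * \<phi> g + a * \<phi> h"
  unfolding dual_Lip0_def by blast

lemma dual_Lip0_scale: "\<phi> \<in> dual_Lip0 \<Longrightarrow> g \<in> Lip0 \<Longrightarrow> \<phi> (\<lambda>x. c * g x) = c * \<phi> g"
  using dual_Lip0_lincomb[of \<phi> g g c 0] by simp

lemma dual_Lip0_outside: "\<phi> \<in> dual_Lip0 \<Longrightarrow> g \<notin> Lip0 \<Longrightarrow> \<phi> g = 0"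
  unfolding dual_Lip0_def by blast

lemma abs_le_dnorm: "\<phi> \<in> dual_Lip0 \<Longrightarrow> g \<in> Lip0_ball \<Longrightarrow> \<bar>\<phi> g\<bar> \<le> dnorm \<phi>"
  unfolding dnorm_def dual_Lip0_def by (rule cSup_upper) auto

lemma dnorm_leI: "(\<And>g. g \<in> Lip0_ball \<Longrightarrow> \<bar>\<phi> g\<bar> \<le> K) \<Longrightarrow> dnorm \<phi> \<le> K"
  unfolding dnorm_def by (rule cSup_least) (use zero_in_Lip0_ball in auto)

lemma dnorm_nonneg: "\<phi> \<in> dual_Lip0 \<Longrightarrow> 0 \<le> dnorm \<phi>"
  using abs_le_dnorm[OF _ zero_in_Lip0_ball] by fastforce

lemma dnorm_zero [simp]: "dnorm (\<lambda>g. 0) = 0"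
proof -
  have "{\<bar>0::real\<bar> | g. g \<in> Lip0_ball} = {0}"
    using zero_in_Lip0_ball by auto
  then show ?thesis
    unfolding dnorm_def by (metis cSup_singleton)
qed

lemma abs_le_lipschitz_dnorm:
  assumes "\<phi> \<in> dual_Lip0" "L-lipschitz_on UNIV h" "h 0 = 0"
  shows "\<bar>\<phi> h\<bar> \<le> L * dnorm \<phi>"
proof -
  have "h \<in> Lip0"
    using assms(2,3) by (auto simp: Lip0_def)
  show ?thesis
  proof (cases "L = 0")
    case True
    have "\<phi> (\<lambda>x. 0 * h x) = 0"
      using dual_Lip0_scale[OF assms(1) \<open>h \<in> Lip0\<close>, of 0] by simp
    moreover have "h = (\<lambda>x. 0)"
      using True lipschitz_onD[OF assms(2), of _ 0] assms(3) by fastforce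
    ultimately show ?thesis
      using True by simp
  next
    case False
    then have "L > 0"
      using lipschitz_on_nonneg[OF assms(2)] by simp
    have "((1 / L) * L)-lipschitz_on UNIV (\<lambda>x. (1 / L) * h x)"
      using \<open>L > 0\<close> by (intro lipschitz_intros assms(2)) simp
    then have "(\<lambda>x. (1 / L) * h x) \<in> Lip0_ball"
      using \<open>L > 0\<close> assms(3) by (simp add: Lip0_ball_def)
    then have "\<bar>(1 / L) * \<phi> h\<bar> \<le> dnorm \<phi>"
      using abs_le_dnorm[OF assms(1)] dual_Lip0_scale[OF assms(1) \<open>h \<in> Lip0\<close>] by metis
    then show ?thesis
      using \<open>L > 0\<close> by (simp add: abs_mult field_simps)
  qed
qed

lemma dnorm_le_0_imp_zero:
  fixes \<phi> :: "('a::real_normed_vector \<Rightarrow> real) \<Rightarrow> real"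
  assumes "\<phi> \<in> dual_Lip0" "dnorm \<phi> \<le> 0"
  shows "\<phi> = (\<lambda>g. 0)"
proof
  fix g :: "'a \<Rightarrow> real"
  show "\<phi> g = 0"
  proof (cases "g \<in> Lip0")
    case True
    then obtain L where "L-lipschitz_on UNIV g" "g 0 = 0"
      by (auto simp: Lip0_def)
    moreover from this have "L * dnorm \<phi> \<le> 0"
      using assms(2) by (simp add: mult_nonneg_nonpos lipschitz_on_nonneg)
    ultimately show ?thesis
      using abs_le_lipschitz_dnorm[OF assms(1)] by fastforce
  qed (use dual_Lip0_outside[OF assms(1)] in auto)
qed

lemma
  fixes v :: "'i \<Rightarrow> ('a::real_normed_vector \<Rightarrow> real) \<Rightarrow> real"
  assumes "\<And>i. i \<in> I \<Longrightarrow> v i \<in> dual_Lip0"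
  shows dnorm_sum_le: "dnorm (\<lambda>g. \<Sum>i\<in>I. c i * v i g) \<le> (\<Sum>i\<in>I. \<bar>c i\<bar> * dnorm (v i))"
    and dual_Lip0_sum: "(\<lambda>g. \<Sum>i\<in>I. c i * v i g) \<in> dual_Lip0"
proof -
  have bound: "\<bar>\<Sum>i\<in>I. c i * v i g\<bar> \<le> (\<Sum>i\<in>I. \<bar>c i\<bar> * dnorm (v i))" if "g \<in> Lip0_ball" for g
  proof -
    have "\<bar>\<Sum>i\<in>I. c i * v i g\<bar> \<le> (\<Sum>i\<in>I. \<bar>c i * v i g\<bar>)"
      by (rule sum_abs)
    also have "\<dots> \<le> (\<Sum>i\<in>I. \<bar>c i\<bar> * dnorm (v i))"
      by (intro sum_mono) (auto simp: abs_mult intro!: mult_left_mono abs_le_dnorm assms that)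
    finally show ?thesis .
  qed
  then show "dnorm (\<lambda>g. \<Sum>i\<in>I. c i * v i g) \<le> (\<Sum>i\<in>I. \<bar>c i\<bar> * dnorm (v i))"
    by (intro dnorm_leI)
  have linear: "(\<Sum>i\<in>I. c i * v i (\<lambda>x. c' * g x + a' * h x))
      = c' * (\<Sum>i\<in>I. c i * v i g) + a' * (\<Sum>i\<in>I. c i * v i h)" if "g \<in> Lip0" "h \<in> Lip0" for g h c' a'
  proof -
    have "v i (\<lambda>x. c' * g x + a' * h x) = c' * v i g + a' * v i h" if "i \<in> I" for i
      using dual_Lip0_lincomb[OF assms[OF that] \<open>g \<in> Lip0\<close> \<open>h \<in> Lip0\<close>] .
    then show ?thesis
      by (simp add: sum.distrib sum_distrib_left algebra_simps cong: sum.cong)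
  qed
  show "(\<lambda>g. \<Sum>i\<in>I. c i * v i g) \<in> dual_Lip0"
    unfolding dual_Lip0_def using bound linear
    by (auto intro!: sum.neutral bdd_aboveI simp: dual_Lip0_outside assms)
qed

lemma dual_Lip0_lincomb_closed:
  fixes \<phi> \<psi> :: "('a::real_normed_vector \<Rightarrow> real) \<Rightarrow> real"
  assumes "\<phi> \<in> dual_Lip0" "\<psi> \<in> dual_Lip0"
  shows "(\<lambda>g. c * \<phi> g + a * \<psi> g) \<in> dual_Lip0"
  using dual_Lip0_sum[of "{True, False}" "\<lambda>b. if b then \<phi> else \<psi>" "\<lambda>b. if b then c else a"] assms
  by simp

lemma abs_dnorm_diff_le:
  fixes \<phi> \<psi> :: "('a::real_normed_vector \<Rightarrow> real) \<Rightarrow> real"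
  assumes "\<phi> \<in> dual_Lip0" "\<psi> \<in> dual_Lip0"
  shows "\<bar>dnorm \<phi> - dnorm \<psi>\<bar> \<le> dnorm (\<lambda>g. \<phi> g - \<psi> g)"
proof -
  have "(\<lambda>g. \<phi> g - \<psi> g) \<in> dual_Lip0"
    using dual_Lip0_lincomb_closed[OF assms, of 1 "-1"] by simp
  then have diff: "\<bar>\<phi> g - \<psi> g\<bar> \<le> dnorm (\<lambda>g. \<phi> g - \<psi> g)" if "g \<in> Lip0_ball" for g :: "'a \<Rightarrow> real"
    using abs_le_dnorm[OF _ that] by fastforce
  have "dnorm \<phi> \<le> dnorm \<psi> + dnorm (\<lambda>g. \<phi> g - \<psi> g)"
  proof (rule dnorm_leI)
    fix g :: "'a \<Rightarrow> real"
    assume "g \<in> Lip0_ball"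
    moreover have "\<bar>\<phi> g\<bar> \<le> \<bar>\<psi> g\<bar> + \<bar>\<phi> g - \<psi> g\<bar>"
      using abs_triangle_ineq[of "\<psi> g" "\<phi> g - \<psi> g"] by simp
    ultimately show "\<bar>\<phi> g\<bar> \<le> dnorm \<psi> + dnorm (\<lambda>g. \<phi> g - \<psi> g)"
      using abs_le_dnorm[OF assms(2)] diff by fastforce
  qed
  moreover have "dnorm \<psi> \<le> dnorm \<phi> + dnorm (\<lambda>g. \<phi> g - \<psi> g)"
  proof (rule dnorm_leI)
    fix g :: "'a \<Rightarrow> real"
    assume "g \<in> Lip0_ball"
    moreover have "\<bar>\<psi> g\<bar> \<le> \<bar>\<phi> g\<bar> + \<bar>\<phi> g - \<psi> g\<bar>"
      using abs_triangle_ineq[of "\<phi> g" "\<psi> g - \<phi> g"] by (simp add: abs_minus_commute)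
    ultimately show "\<bar>\<psi> g\<bar> \<le> dnorm \<phi> + dnorm (\<lambda>g. \<phi> g - \<psi> g)"
      using abs_le_dnorm[OF assms(1)] diff by fastforce
  qed
  ultimately show ?thesis
    by linarith
qed

lemma dirac_in_dual_Lip0: "dirac x \<in> dual_Lip0"
proof -
  have "\<bar>g x\<bar> \<le> norm x" if "g \<in> Lip0_ball" for g
    using that lipschitz_onD[of 1 UNIV g x 0] by (auto simp: Lip0_ball_def dist_real_def)
  then have "bdd_above {\<bar>dirac x g\<bar> |g. g \<in> Lip0_ball}"
    using Lip0_ball_subset_Lip0 by (intro bdd_aboveI[where M = "norm x"]) (auto simp: dirac_def)
  moreover have "dirac x (\<lambda>y. c * g y + a * h y) = c * dirac x g + a * dirac x h"
    if "g \<in> Lip0" "h \<in> Lip0" for g h c a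
    using Lip0_lincomb[OF that] that by (simp add: dirac_def)
  ultimately show ?thesis
    unfolding dual_Lip0_def by (simp add: dirac_def)
qed

lemma fspan_sum_mem:
  assumes "finite I" "\<And>i. i \<in> I \<Longrightarrow> v i \<in> S"
  shows "(\<lambda>g. \<Sum>i\<in>I. a i * v i g) \<in> fspan S"
proof -
  obtain h where h: "bij_betw h {..<card I} I"
    using ex_bij_betw_nat_finite[OF assms(1)] by (auto simp: atLeast0LessThan)
  then have "\<forall>j<card I. v (h j) \<in> S"
    using assms(2) bij_betwE by blast
  moreover have "(\<lambda>g. \<Sum>i\<in>I. a i * v i g) = (\<lambda>g. \<Sum>j<card I. a (h j) * v (h j) g)"
    by (intro ext) (rule sum.reindex_bij_betw[OF h, symmetric])
  ultimately show ?thesis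
    unfolding fspan_def
    by (intro CollectI exI[of _ "card I"] exI[of _ "\<lambda>j. a (h j)"] exI[of _ "\<lambda>j. v (h j)"]) simp
qed

lemma fspan_obtain:
  assumes "e \<in> fspan S"
  obtains n :: nat and a w where "\<And>i. i < n \<Longrightarrow> w i \<in> S" "e = (\<lambda>g. \<Sum>i<n. a i * w i g)"
  using assms unfolding fspan_def by auto

lemma fspan_superset: "S \<subseteq> fspan S"
proof
  fix b
  assume "b \<in> S"
  then show "b \<in> fspan S"
    using fspan_sum_mem[of "{0::nat}" "\<lambda>_. b" S "\<lambda>_. 1"] by simp
qed

lemma fspan_zero: "(\<lambda>g. 0) \<in> fspan S"
  using fspan_sum_mem[of "{}::nat set" _ S] by simp

lemma fspan_lincomb:
  assumes "u \<in> fspan S" "v \<in> fspan S"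
  shows "(\<lambda>g. c * u g + a * v g) \<in> fspan S"
proof -
  obtain n1 a1 w1 where 1: "\<And>i. i < (n1::nat) \<Longrightarrow> w1 i \<in> S" "u = (\<lambda>g. \<Sum>i<n1. a1 i * w1 i g)"
    using fspan_obtain[OF assms(1)] by blast
  obtain n2 a2 w2 where 2: "\<And>i. i < (n2::nat) \<Longrightarrow> w2 i \<in> S" "v = (\<lambda>g. \<Sum>i<n2. a2 i * w2 i g)"
    using fspan_obtain[OF assms(2)] by blast
  define I :: "(nat + nat) set" where "I = Inl ` {..<n1} \<union> Inr ` {..<n2}"
  define w where "w = case_sum w1 w2"
  define b where "b = case_sum (\<lambda>i. c * a1 i) (\<lambda>i. a * a2 i)"
  have "(\<lambda>g. \<Sum>i\<in>I. b i * w i g) \<in> fspan S"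
    by (rule fspan_sum_mem) (auto simp: I_def w_def 1 2)
  moreover have "(\<Sum>i\<in>I. b i * w i g) = c * u g + a * v g" for g
  proof -
    have "(\<Sum>i\<in>I. b i * w i g) = (\<Sum>i\<in>Inl ` {..<n1}. b i * w i g) + (\<Sum>i\<in>Inr ` {..<n2}. b i * w i g)"
      unfolding I_def by (rule sum.union_disjoint) auto
    also have "\<dots> = c * u g + a * v g"
      by (simp add: sum.reindex b_def w_def 1 2 sum_distrib_left mult.assoc)
    finally show ?thesis .
  qed
  ultimately show ?thesis
    by simp
qed

lemma fspan_insert_obtain:
  assumes "e \<in> fspan (insert b B)"
  obtains e0 \<alpha> where "e0 \<in> fspan B" "e = (\<lambda>g. e0 g + \<alpha> * b g)"
proof -
  obtain n a w where w: "\<And>i. i < (n::nat) \<Longrightarrow> w i \<in> insert b B" "e = (\<lambda>g. \<Sum>i<n. a i * w i g)"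
    using fspan_obtain[OF assms] by blast
  define J where "J = {i. i < n \<and> w i \<noteq> b}"
  define e0 where "e0 = (\<lambda>g. \<Sum>i\<in>J. a i * w i g)"
  have "e0 \<in> fspan B"
    unfolding e0_def by (rule fspan_sum_mem) (use w in \<open>auto simp: J_def\<close>)
  moreover have "e = (\<lambda>g. e0 g + (\<Sum>i\<in>{..<n} - J. a i) * b g)"
  proof
    fix g
    have "(\<Sum>i<n. a i * w i g) = (\<Sum>i\<in>{..<n} - J. a i * w i g) + (\<Sum>i\<in>J. a i * w i g)"
      by (rule sum.subset_diff) (auto simp: J_def)
    also have "(\<Sum>i\<in>{..<n} - J. a i * w i g) = (\<Sum>i\<in>{..<n} - J. a i) * b g"
      by (auto simp: sum_distrib_right J_def intro!: sum.cong)
    finally show "e g = e0 g + (\<Sum>i\<in>{..<n} - J. a i) * b g"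
      using w(2) e0_def by (simp add: add.commute)
  qed
  ultimately show ?thesis
    using that by blast
qed

lemma fspan_subset_dual_Lip0:
  assumes "S \<subseteq> dual_Lip0"
  shows "fspan S \<subseteq> dual_Lip0"
proof
  fix e
  assume "e \<in> fspan S"
  then obtain n :: nat and a w where "\<And>i. i < n \<Longrightarrow> w i \<in> S" "e = (\<lambda>g. \<Sum>i<n. a i * w i g)"
    by (blast elim: fspan_obtain)
  then show "e \<in> dual_Lip0"
    using assms by (auto intro!: dual_Lip0_sum)
qed

definition dirac_sum :: "'k set \<Rightarrow> ('k \<Rightarrow> real) \<Rightarrow> ('k \<Rightarrow> 'a::real_normed_vector) \<Rightarrow> ('a \<Rightarrow> real) \<Rightarrow> real" where
  "dirac_sum K a x = (\<lambda>g. \<Sum>k\<in>K. a k * dirac (x k) g)"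

lemma dirac_sum_apply: "g \<in> Lip0 \<Longrightarrow> dirac_sum K a x g = (\<Sum>k\<in>K. a k * g (x k))"
  by (simp add: dirac_sum_def dirac_def)

lemma dirac_sum_in_dual_Lip0: "dirac_sum K a x \<in> dual_Lip0"
  unfolding dirac_sum_def by (rule dual_Lip0_sum) (rule dirac_in_dual_Lip0)

lemma dirac_sum_in_fspan: "finite K \<Longrightarrow> dirac_sum K a x \<in> fspan (range dirac)"
  unfolding dirac_sum_def by (rule fspan_sum_mem) auto

lemma dirac_sum_in_free_space: "finite K \<Longrightarrow> dirac_sum K a x \<in> free_space TYPE('a::real_normed_vector)"
  unfolding free_space_def using dirac_sum_in_dual_Lip0 dirac_sum_in_fspan
  by (auto intro!: bexI[of _ "dirac_sum K a x"])

lemma free_space_subset_dual_Lip0: "free_space TYPE('a::real_normed_vector) \<subseteq> dual_Lip0"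
  by (auto simp: free_space_def)

lemma fspan_diracs_obtain:
  fixes \<psi> :: "('a::real_normed_vector \<Rightarrow> real) \<Rightarrow> real"
  assumes "\<psi> \<in> fspan (range dirac)"
  obtains m :: nat and a and x :: "nat \<Rightarrow> 'a" where "\<psi> = dirac_sum {..<m} a x"
proof -
  obtain m :: nat and a w where w: "\<And>j. j < m \<Longrightarrow> w j \<in> range dirac" "\<psi> = (\<lambda>g. \<Sum>j<m. a j * w j g)"
    using fspan_obtain[OF assms] by blast
  have "\<forall>j\<in>{..<m}. \<exists>y. w j = dirac y"
    using w(1) by auto
  then obtain x where "\<forall>j\<in>{..<m}. w j = dirac (x j)"
    unfolding bchoice_iff by blast
  then have "\<psi> = dirac_sum {..<m} a x"
    unfolding w(2) dirac_sum_def by (intro ext sum.cong) auto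
  then show ?thesis
    by (rule that)
qed

lemma free_space_approx:
  assumes "\<phi> \<in> free_space TYPE('a::real_normed_vector)" "0 < \<eta>"
  shows "\<exists>m::nat. \<exists>a x. dnorm (\<lambda>g. \<phi> g - dirac_sum {..<m} a x g) < \<eta>"
proof -
  obtain \<psi> where \<psi>: "\<psi> \<in> fspan (range dirac)" "dnorm (\<lambda>g. \<phi> g - \<psi> g) < \<eta>"
    using assms unfolding free_space_def by blast
  obtain m a and x :: "nat \<Rightarrow> 'a" where "\<psi> = dirac_sum {..<m} a x"
    using fspan_diracs_obtain[OF \<psi>(1)] by blast
  with \<psi>(2) have "dnorm (\<lambda>g. \<phi> g - dirac_sum {..<m} a x g) < \<eta>"
    by simp
  then show ?thesis
    by blast
qed

lemma linear_on_set_UNIV_D: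
  "linear_on_set UNIV T \<Longrightarrow> T (\<lambda>g. c * u g + a * v g) = (\<lambda>h. c * T u h + a * T v h)"
  unfolding linear_on_set_def fadd_def fscale_def by blast

lemma linear_on_set_zero:
  assumes "linear_on_set UNIV T"
  shows "T (\<lambda>g. 0) = (\<lambda>h. 0)"
  using linear_on_set_UNIV_D[OF assms, of 0 "\<lambda>g. 0" 0 "\<lambda>g. 0"] by simp

lemma linear_on_set_sum:
  assumes "linear_on_set UNIV T" "finite I"
  shows "T (\<lambda>g. \<Sum>i\<in>I. c i * w i g) = (\<lambda>h. \<Sum>i\<in>I. c i * T (w i) h)"
  using assms(2)
proof (induction I rule: finite_induct)
  case empty
  then show ?case
    using linear_on_set_zero[OF assms(1)] by simp
next
  case (insert i I)
  then show ?case
    using linear_on_set_UNIV_D[OF assms(1), of "c i" "w i" 1 "\<lambda>g. \<Sum>i\<in>I. c i * w i g"] by simp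
qed

lemma image_fspan_linear:
  assumes "linear_on_set UNIV T"
  shows "T ` fspan B = fspan (T ` B)"
proof
  show "T ` fspan B \<subseteq> fspan (T ` B)"
  proof
    fix y assume "y \<in> T ` fspan B"
    then obtain n a w where w: "\<And>i. i < (n::nat) \<Longrightarrow> w i \<in> B" "y = T (\<lambda>g. \<Sum>i<n. a i * w i g)"
      by (auto elim!: fspan_obtain)
    then show "y \<in> fspan (T ` B)"
      by (auto simp: linear_on_set_sum[OF assms] intro!: fspan_sum_mem)
  qed
  show "fspan (T ` B) \<subseteq> T ` fspan B"
  proof
    fix y assume "y \<in> fspan (T ` B)"
    then obtain n a w where w: "\<And>i. i < (n::nat) \<Longrightarrow> w i \<in> T ` B" "y = (\<lambda>g. \<Sum>i<n. a i * w i g)"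
      by (auto elim!: fspan_obtain)
    then have "\<forall>i\<in>{..<n}. \<exists>u. u \<in> B \<and> w i = T u"
      by auto
    then obtain u where u: "\<forall>i\<in>{..<n}. u i \<in> B \<and> w i = T (u i)"
      unfolding bchoice_iff by blast
    then have "y = T (\<lambda>g. \<Sum>i<n. a i * u i g)"
      using w(2) by (simp add: linear_on_set_sum[OF assms])
    moreover have "(\<lambda>g. \<Sum>i<n. a i * u i g) \<in> fspan B"
      using u by (intro fspan_sum_mem) auto
    ultimately show "y \<in> T ` fspan B"
      by blast
  qed
qed

section \<open>Bounded coordinate functionals\<close>

definition linear_functional :: "(('c \<Rightarrow> real) \<Rightarrow> real) \<Rightarrow> bool" where
  "linear_functional L \<longleftrightarrow> (\<forall>e1 e2 c a. L (\<lambda>g. c * e1 g + a * e2 g) = c * L e1 + a * L e2)"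

definition bounded_linear_functional :: "((('a::real_normed_vector \<Rightarrow> real) \<Rightarrow> real) \<Rightarrow> real) \<Rightarrow> bool" where
  "bounded_linear_functional L \<longleftrightarrow>
     linear_functional L \<and> (\<exists>K\<ge>0. \<forall>e\<in>dual_Lip0. \<bar>L e\<bar> \<le> K * dnorm e)"

lemma linear_functionalD: "linear_functional L \<Longrightarrow> L (\<lambda>g. c * e1 g + a * e2 g) = c * L e1 + a * L e2"
  unfolding linear_functional_def by blast

lemma bounded_linear_functional_eval:
  assumes "g0 \<in> Lip0"
  shows "bounded_linear_functional (\<lambda>e. e g0)"
proof -
  obtain K where "K-lipschitz_on UNIV g0" "g0 0 = 0"
    using assms by (auto simp: Lip0_def)
  then have "\<forall>e\<in>dual_Lip0. \<bar>e g0\<bar> \<le> K * dnorm e"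
    using abs_le_lipschitz_dnorm by blast
  then show ?thesis
    unfolding bounded_linear_functional_def linear_functional_def
    using lipschitz_on_nonneg[OF \<open>K-lipschitz_on UNIV g0\<close>] by auto
qed

lemma bounded_linear_functional_lincomb:
  assumes "bounded_linear_functional L1" "bounded_linear_functional L2"
  shows "bounded_linear_functional (\<lambda>e. c * L1 e + a * L2 e)"
proof -
  obtain K1 K2 where K: "0 \<le> K1" "\<forall>e\<in>dual_Lip0. \<bar>L1 e\<bar> \<le> K1 * dnorm e"
    "0 \<le> K2" "\<forall>e\<in>dual_Lip0. \<bar>L2 e\<bar> \<le> K2 * dnorm e"
    using assms unfolding bounded_linear_functional_def by blast
  have "linear_functional L1" "linear_functional L2"
    using assms unfolding bounded_linear_functional_def by blast+
  then have "linear_functional (\<lambda>e. c * L1 e + a * L2 e)"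
    unfolding linear_functional_def
    by (simp only: linear_functionalD) (simp add: algebra_simps)
  moreover have "\<bar>c * L1 e + a * L2 e\<bar> \<le> (\<bar>c\<bar> * K1 + \<bar>a\<bar> * K2) * dnorm e" if "e \<in> dual_Lip0" for e
  proof -
    have "\<bar>c * L1 e + a * L2 e\<bar> \<le> \<bar>c\<bar> * \<bar>L1 e\<bar> + \<bar>a\<bar> * \<bar>L2 e\<bar>"
      by (metis abs_mult abs_triangle_ineq)
    also have "\<dots> \<le> \<bar>c\<bar> * (K1 * dnorm e) + \<bar>a\<bar> * (K2 * dnorm e)"
      using K that by (intro add_mono mult_left_mono) auto
    finally show ?thesis
      by (simp add: algebra_simps)
  qed
  ultimately show ?thesis
    unfolding bounded_linear_functional_def using K by (intro conjI exI[of _ "\<bar>c\<bar> * K1 + \<bar>a\<bar> * K2"]) auto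
qed

lemma bounded_linear_functional_scale:
  "bounded_linear_functional L \<Longrightarrow> bounded_linear_functional (\<lambda>e. c * L e)"
  using bounded_linear_functional_lincomb[of L L c 0] by simp

lemma bounded_linear_functional_zero: "bounded_linear_functional (\<lambda>e. 0)"
  unfolding bounded_linear_functional_def linear_functional_def by (intro conjI exI[of _ 0]) auto

lemma bounded_linear_functional_sum:
  assumes "\<And>i. i \<in> I \<Longrightarrow> bounded_linear_functional (L i)"
  shows "bounded_linear_functional (\<lambda>e. \<Sum>i\<in>I. c i * L i e)"
proof (cases "finite I")
  case True
  then show ?thesis
    using assms
  proof (induction I rule: finite_induct)
    case empty
    then show ?case
      using bounded_linear_functional_zero by simp
  next
    case (insert i I)
    then have "bounded_linear_functional (\<lambda>e. c i * L i e + 1 * (\<Sum>i\<in>I. c i * L i e))"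
      by (intro bounded_linear_functional_lincomb) auto
    then show ?case
      using insert by simp
  qed
next
  case False
  then show ?thesis
    using bounded_linear_functional_zero by simp
qed

lemma linear_on_set_dirac_sum_coeffs:
  assumes "\<And>k. k \<in> K \<Longrightarrow> linear_functional (c k)"
  shows "linear_on_set UNIV (\<lambda>e. dirac_sum K (\<lambda>k. c k e) y)"
proof -
  have "dirac_sum K (\<lambda>k. c k (\<lambda>g. c1 * u g + c2 * v g)) y h
      = c1 * dirac_sum K (\<lambda>k. c k u) y h + c2 * dirac_sum K (\<lambda>k. c k v) y h" for u v c1 c2 h
  proof -
    have "c k (\<lambda>g. c1 * u g + c2 * v g) = c1 * c k u + c2 * c k v" if "k \<in> K" for k
      using linear_functionalD[OF assms[OF that]] .
    then show ?thesis
      unfolding dirac_sum_def by (simp add: sum.distrib sum_distrib_left algebra_simps)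
  qed
  then show ?thesis
    unfolding linear_on_set_def fadd_def fscale_def by auto
qed

definition bounded_coordinates ::
  "(('a::real_normed_vector \<Rightarrow> real) \<Rightarrow> real) set \<Rightarrow> nat \<Rightarrow> (nat \<Rightarrow> ('a \<Rightarrow> real) \<Rightarrow> real)
     \<Rightarrow> (nat \<Rightarrow> (('a \<Rightarrow> real) \<Rightarrow> real) \<Rightarrow> real) \<Rightarrow> bool" where
  "bounded_coordinates B n bb L \<longleftrightarrow> (\<forall>i<n. bb i \<in> B \<and> bounded_linear_functional (L i)) \<and>
      (\<forall>e\<in>fspan B. \<forall>g\<in>Lip0. e g = (\<Sum>i<n. L i e * bb i g))"

lemma bounded_coordinates_empty:
  fixes bb :: "nat \<Rightarrow> ('a::real_normed_vector \<Rightarrow> real) \<Rightarrow> real"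
  shows "bounded_coordinates {} 0 bb L"
proof -
  have "e g = 0" if "e \<in> fspan {}" for e :: "('a \<Rightarrow> real) \<Rightarrow> real" and g
    using that by (auto elim!: fspan_obtain intro!: sum.neutral)
  then show ?thesis
    unfolding bounded_coordinates_def by simp
qed

lemma bounded_coordinates_residual:
  assumes coords: "bounded_coordinates B n bb L" and e: "e \<in> fspan (insert b B)"
  obtains \<alpha> where "\<And>g. g \<in> Lip0 \<Longrightarrow>
    e g - (\<Sum>i<n. L i e * bb i g) = \<alpha> * (b g - (\<Sum>i<n. L i b * bb i g))"
proof -
  obtain e0 \<alpha> where e0: "e0 \<in> fspan B" "e = (\<lambda>g. e0 g + \<alpha> * b g)"
    using fspan_insert_obtain[OF e] .
  have L_e: "L i e = L i e0 + \<alpha> * L i b" if "i < n" for i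
    using linear_functionalD[of "L i" 1 e0 \<alpha> b] coords that
    by (simp add: e0(2) bounded_coordinates_def bounded_linear_functional_def)
  have "e g - (\<Sum>i<n. L i e * bb i g) = \<alpha> * (b g - (\<Sum>i<n. L i b * bb i g))" if g: "g \<in> Lip0" for g
  proof -
    have "e g = e0 g + \<alpha> * b g"
      by (simp add: e0(2))
    moreover have "e0 g = (\<Sum>i<n. L i e0 * bb i g)"
      using coords e0(1) g unfolding bounded_coordinates_def by blast
    ultimately show ?thesis
      using L_e by (simp add: sum.distrib sum_distrib_left algebra_simps)
  qed
  then show ?thesis
    by (rule that)
qed

lemma bounded_coordinates_insert_dependent:
  assumes coords: "bounded_coordinates B n bb L"
    and dependent: "\<forall>g\<in>Lip0. b g = (\<Sum>i<n. L i b * bb i g)"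
  shows "bounded_coordinates (insert b B) n bb L"
proof -
  have "e g = (\<Sum>i<n. L i e * bb i g)" if e: "e \<in> fspan (insert b B)" and g: "g \<in> Lip0" for e g
  proof -
    obtain \<alpha> where \<alpha>: "\<And>g. g \<in> Lip0 \<Longrightarrow>
        e g - (\<Sum>i<n. L i e * bb i g) = \<alpha> * (b g - (\<Sum>i<n. L i b * bb i g))"
      using bounded_coordinates_residual[OF coords e] by blast
    have "e g - (\<Sum>i<n. L i e * bb i g) = 0"
      using \<alpha>[OF g] dependent g by simp
    then show ?thesis
      by simp
  qed
  then show ?thesis
    using coords unfolding bounded_coordinates_def by auto
qed

text \<open>If b is not reproduced by the old coordinates at some g0, the new coordinate of e
  is its residual at g0, rescaled.\<close>

lemma bounded_coordinates_insert_independent: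
  assumes coords: "bounded_coordinates B n bb L"
    and g0: "g0 \<in> Lip0" "b g0 \<noteq> (\<Sum>i<n. L i b * bb i g0)"
  shows "\<exists>L'. bounded_coordinates (insert b B) (Suc n) (bb(n := b)) L'"
proof -
  define P where "P e g = (\<Sum>i<n. L i e * bb i g)" for e g
  define \<kappa> where "\<kappa> e = (e g0 - P e g0) / (b g0 - P b g0)" for e
  have L: "bounded_linear_functional (L i)" if "i < n" for i
    using coords that by (simp add: bounded_coordinates_def)
  have "\<kappa> = (\<lambda>e. (1 / (b g0 - P b g0)) * e g0 + (- 1 / (b g0 - P b g0)) * (\<Sum>i<n. bb i g0 * L i e))"
    unfolding \<kappa>_def P_def by (simp add: diff_divide_distrib ac_simps)
  moreover have "bounded_linear_functional
      (\<lambda>e. (1 / (b g0 - P b g0)) * e g0 + (- 1 / (b g0 - P b g0)) * (\<Sum>i<n. bb i g0 * L i e))"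
    using L g0(1) by (intro bounded_linear_functional_lincomb bounded_linear_functional_eval
        bounded_linear_functional_sum) auto
  ultimately have \<kappa>: "bounded_linear_functional \<kappa>"
    by simp
  define L' where "L' i = (if i < n then (\<lambda>e. 1 * L i e + (- L i b) * \<kappa> e) else \<kappa>)" for i
  have "bounded_linear_functional (L' i)" for i
  proof (cases "i < n")
    case True
    then have "bounded_linear_functional (\<lambda>e. 1 * L i e + (- L i b) * \<kappa> e)"
      using L \<kappa> by (intro bounded_linear_functional_lincomb) auto
    with True show ?thesis
      by (simp add: L'_def)
  next
    case False
    with \<kappa> show ?thesis
      by (simp add: L'_def)
  qed
  moreover have "e g = (\<Sum>i<Suc n. L' i e * (bb(n := b)) i g)"
    if e: "e \<in> fspan (insert b B)" and g: "g \<in> Lip0" for e g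
  proof -
    obtain \<alpha> where \<alpha>: "\<And>g. g \<in> Lip0 \<Longrightarrow> e g - P e g = \<alpha> * (b g - P b g)"
      using bounded_coordinates_residual[OF coords e] unfolding P_def by blast
    have "\<kappa> e = \<alpha>"
      using \<alpha>[OF g0(1)] g0(2) by (simp add: \<kappa>_def P_def)
    then have "e g - P e g = \<kappa> e * (b g - P b g)"
      using \<alpha>[OF g] by simp
    then have "e g = P e g + \<kappa> e * (b g - P b g)"
      by linarith
    then show ?thesis
      by (simp add: P_def L'_def algebra_simps sum_subtractf sum_distrib_left)
  qed
  ultimately show ?thesis
    using coords unfolding bounded_coordinates_def by (intro exI[of _ L']) (auto simp: less_Suc_eq)
qed

lemma finite_imp_bounded_coordinates:
  fixes B :: "(('a::real_normed_vector \<Rightarrow> real) \<Rightarrow> real) set"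
  assumes "finite B"
  shows "\<exists>n bb L. bounded_coordinates B n bb L"
  using assms
proof (induction B rule: finite_induct)
  case empty
  then show ?case
    using bounded_coordinates_empty by blast
next
  case (insert b B)
  then obtain n bb L where coords: "bounded_coordinates B n bb L"
    by blast
  show ?case
  proof (cases "\<forall>g\<in>Lip0. b g = (\<Sum>i<n. L i b * bb i g)")
    case True
    then show ?thesis
      using bounded_coordinates_insert_dependent[OF coords] by blast
  next
    case False
    then obtain g0 where "g0 \<in> Lip0" "b g0 \<noteq> (\<Sum>i<n. L i b * bb i g0)"
      by blast
    then show ?thesis
      using bounded_coordinates_insert_independent[OF coords] by blast
  qed
qed

section \<open>Push-forward along bi-Lipschitz maps\<close>

lemma mcshane_extension:
  fixes v :: "'m::metric_space \<Rightarrow> real"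
  assumes "finite M" "M \<noteq> {}" "L-lipschitz_on M v"
  obtains G where "L-lipschitz_on UNIV G" "\<And>m. m \<in> M \<Longrightarrow> G m = v m"
proof -
  define G where "G y = Min ((\<lambda>m. v m + L * dist y m) ` M)" for y
  have L: "0 \<le> L"
    using lipschitz_on_nonneg[OF assms(3)] .
  have G_le: "G y \<le> v m + L * dist y m" if "m \<in> M" for y m
    unfolding G_def using assms(1) that by (intro Min_le) auto
  have attained: "\<exists>m\<in>M. G y = v m + L * dist y m" for y
  proof -
    have "G y \<in> (\<lambda>m. v m + L * dist y m) ` M"
      unfolding G_def using assms(1,2) by (intro Min_in) auto
    then show ?thesis
      by auto
  qed
  have G_diff: "G x - G y \<le> L * dist x y" for x y
  proof -
    obtain m where m: "m \<in> M" "G y = v m + L * dist y m"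
      using attained by blast
    have "G x \<le> v m + L * dist x m"
      by (rule G_le[OF m(1)])
    also have "\<dots> \<le> v m + L * (dist x y + dist y m)"
      using L dist_triangle[of x m y] by (intro add_left_mono mult_left_mono) auto
    finally show ?thesis
      using m(2) by (simp add: algebra_simps)
  qed
  have "L-lipschitz_on UNIV G"
  proof (rule lipschitz_onI)
    fix x y
    show "dist (G x) (G y) \<le> L * dist x y"
      using G_diff[of x y] G_diff[of y x] by (simp add: dist_real_def abs_le_iff dist_commute)
  qed (rule L)
  moreover have "G m = v m" if "m \<in> M" for m
  proof -
    obtain m' where m': "m' \<in> M" "G m = v m' + L * dist m m'"
      using attained by blast
    have "v m - v m' \<le> L * dist m m'"
      using lipschitz_onD[OF assms(3) that m'(1)] by (simp add: dist_real_def)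
    then show ?thesis
      using G_le[OF that, of m] m'(2) by simp
  qed
  ultimately show ?thesis
    using that by blast
qed

lemma dnorm_dirac_sum_comp_le:
  fixes \<phi> :: "'a::real_normed_vector \<Rightarrow> 'b::real_normed_vector"
  assumes "finite K" "b-lipschitz_on (insert 0 (x ` K)) \<phi>" "\<phi> 0 = 0"
  shows "dnorm (dirac_sum K a (\<phi> \<circ> x)) \<le> b * dnorm (dirac_sum K a x)"
proof (rule dnorm_leI)
  fix h :: "'b \<Rightarrow> real"
  assume h: "h \<in> Lip0_ball"
  define M where "M = insert 0 (x ` K)"
  have "1-lipschitz_on (\<phi> ` M) h"
    using h lipschitz_on_subset[OF _ subset_UNIV] by (auto simp: Lip0_ball_def)
  then have "(1 * b)-lipschitz_on M (h \<circ> \<phi>)"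
    using assms(2) unfolding M_def by (intro lipschitz_on_compose)
  moreover have "finite M" "M \<noteq> {}"
    using assms(1) by (auto simp: M_def)
  ultimately obtain G where G: "b-lipschitz_on UNIV G" "\<And>m. m \<in> M \<Longrightarrow> G m = h (\<phi> m)"
    using mcshane_extension[of M b "h \<circ> \<phi>"] by auto
  have "G 0 = 0"
    using G(2)[of 0] assms(3) h by (simp add: M_def Lip0_ball_def)
  then have "G \<in> Lip0"
    using G(1) by (auto simp: Lip0_def)
  then have "dirac_sum K a (\<phi> \<circ> x) h = dirac_sum K a x G"
    using h G(2) Lip0_ball_subset_Lip0
    by (auto simp: dirac_sum_apply M_def intro!: sum.cong)
  then show "\<bar>dirac_sum K a (\<phi> \<circ> x) h\<bar> \<le> b * dnorm (dirac_sum K a x)"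
    using abs_le_lipschitz_dnorm[OF dirac_sum_in_dual_Lip0 G(1) \<open>G 0 = 0\<close>] by simp
qed

text \<open>The lower bound is the upper bound for the inverse map on the (finite) image.\<close>

lemma dnorm_dirac_sum_comp_ge:
  fixes \<phi> :: "'a::real_normed_vector \<Rightarrow> 'b::real_normed_vector"
  assumes "finite K" "0 < c" "\<phi> 0 = 0"
    and lower: "\<And>u v. u \<in> insert 0 (x ` K) \<Longrightarrow> v \<in> insert 0 (x ` K) \<Longrightarrow> c * dist u v \<le> dist (\<phi> u) (\<phi> v)"
  shows "c * dnorm (dirac_sum K a x) \<le> dnorm (dirac_sum K a (\<phi> \<circ> x))"
proof -
  define M where "M = insert 0 (x ` K)"
  have "inj_on \<phi> M"
  proof (rule inj_onI)
    fix u v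
    assume "u \<in> M" "v \<in> M" "\<phi> u = \<phi> v"
    then have "c * dist u v \<le> 0"
      using lower[of u v] unfolding M_def by simp
    then show "u = v"
      using \<open>0 < c\<close> by (simp add: mult_le_0_iff)
  qed
  define \<psi> where "\<psi> = inv_into M \<phi>"
  have \<psi>_\<phi>: "\<psi> (\<phi> u) = u" if "u \<in> M" for u
    using \<open>inj_on \<phi> M\<close> that unfolding \<psi>_def by simp
  have "insert 0 ((\<phi> \<circ> x) ` K) = \<phi> ` M"
    using assms(3) by (simp add: M_def image_comp)
  moreover have "(1 / c)-lipschitz_on (\<phi> ` M) \<psi>"
  proof (rule lipschitz_onI)
    fix p q
    assume "p \<in> \<phi> ` M" "q \<in> \<phi> ` M"
    then obtain u v where "u \<in> M" "v \<in> M" "p = \<phi> u" "q = \<phi> v"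
      by blast
    then show "dist (\<psi> p) (\<psi> q) \<le> 1 / c * dist p q"
      using lower[of u v] \<psi>_\<phi> \<open>0 < c\<close> unfolding M_def by (simp add: field_simps)
  qed (use \<open>0 < c\<close> in simp)
  moreover have "\<psi> 0 = 0"
    using \<psi>_\<phi>[of 0] assms(3) by (simp add: M_def)
  ultimately have "dnorm (dirac_sum K a (\<psi> \<circ> (\<phi> \<circ> x))) \<le> (1 / c) * dnorm (dirac_sum K a (\<phi> \<circ> x))"
    using assms(1) by (intro dnorm_dirac_sum_comp_le) auto
  moreover have "dirac_sum K a (\<psi> \<circ> (\<phi> \<circ> x)) = dirac_sum K a x"
    unfolding dirac_sum_def using \<psi>_\<phi> by (auto simp: M_def intro!: sum.cong)
  ultimately show ?thesis
    using \<open>0 < c\<close> by (simp add: field_simps)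
qed

section \<open>Rescaling a coarse Lipschitz embedding\<close>

lemma finite_separated:
  fixes M :: "'a::real_normed_vector set"
  assumes "finite M"
  obtains \<delta> where "0 < \<delta>" "\<And>x y. x \<in> M \<Longrightarrow> y \<in> M \<Longrightarrow> x \<noteq> y \<Longrightarrow> \<delta> \<le> dist x y"
proof -
  obtain \<delta> where \<delta>: "0 < \<delta>" "\<forall>z\<in>(\<lambda>(x, y). x - y) ` (M \<times> M). z \<noteq> 0 \<longrightarrow> \<delta> \<le> dist 0 z"
    using finite_set_avoid[of "(\<lambda>(x, y). x - y) ` (M \<times> M)" 0] assms by auto
  have "\<delta> \<le> dist x y" if xy: "x \<in> M" "y \<in> M" "x \<noteq> y" for x y
  proof -
    have "x - y \<in> (\<lambda>(x, y). x - y) ` (M \<times> M)"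
      using xy by force
    moreover have "x - y \<noteq> 0"
      using xy by simp
    ultimately have "\<delta> \<le> dist 0 (x - y)"
      using \<delta>(2) by blast
    then show ?thesis
      by (simp add: dist_norm norm_minus_commute)
  qed
  with \<delta>(1) show ?thesis
    using that by blast
qed

lemma coarse_rescale_dist_bounds:
  fixes f :: "'a::real_normed_vector \<Rightarrow> 'b::real_normed_vector"
  assumes coarse: "\<forall>x y. A * norm (x - y) - C \<le> norm (f x - f y) \<and> norm (f x - f y) \<le> B * norm (x - y) + C"
    and "0 < t" and \<phi>: "\<And>x. \<phi> x = (1 / t) *\<^sub>R (f (t *\<^sub>R x) - f 0)"
  shows "A * dist x y - C / t \<le> dist (\<phi> x) (\<phi> y)" and "dist (\<phi> x) (\<phi> y) \<le> B * dist x y + C / t"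
proof -
  have dist_\<phi>: "dist (\<phi> x) (\<phi> y) = norm (f (t *\<^sub>R x) - f (t *\<^sub>R y)) / t"
    using \<open>0 < t\<close> by (simp add: \<phi> dist_norm algebra_simps flip: scaleR_diff_right)
  have "norm (t *\<^sub>R x - t *\<^sub>R y) = t * dist x y"
    using \<open>0 < t\<close> by (simp add: dist_norm flip: scaleR_diff_right)
  then have lo: "A * (t * dist x y) - C \<le> norm (f (t *\<^sub>R x) - f (t *\<^sub>R y))"
    and up: "norm (f (t *\<^sub>R x) - f (t *\<^sub>R y)) \<le> B * (t * dist x y) + C"
    using coarse[rule_format, of "t *\<^sub>R x" "t *\<^sub>R y"] by auto
  have "A * dist x y - C / t = (A * (t * dist x y) - C) / t"
    using \<open>0 < t\<close> by (simp add: field_simps)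
  also have "\<dots> \<le> dist (\<phi> x) (\<phi> y)"
    unfolding dist_\<phi> using divide_right_mono[OF lo, of t] \<open>0 < t\<close> by simp
  finally show "A * dist x y - C / t \<le> dist (\<phi> x) (\<phi> y)" .
  have "dist (\<phi> x) (\<phi> y) \<le> (B * (t * dist x y) + C) / t"
    unfolding dist_\<phi> using divide_right_mono[OF up, of t] \<open>0 < t\<close> by simp
  also have "\<dots> = B * dist x y + C / t"
    using \<open>0 < t\<close> by (simp add: field_simps)
  finally show "dist (\<phi> x) (\<phi> y) \<le> B * dist x y + C / t" .
qed

text \<open>The additive error C / t of the rescaled map is at most s times the minimal distance
  between points of M once t is large.\<close>

lemma coarse_embedding_rescale_on_finite:
  fixes f :: "'a::real_normed_vector \<Rightarrow> 'b::real_normed_vector"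
  assumes "0 < A" "0 \<le> C"
    and coarse: "\<forall>x y. A * norm (x - y) - C \<le> norm (f x - f y) \<and> norm (f x - f y) \<le> B * norm (x - y) + C"
    and "finite M" "0 < s"
  obtains \<phi> :: "'a \<Rightarrow> 'b" where "\<phi> 0 = 0"
    "\<And>x y. x \<in> M \<Longrightarrow> y \<in> M \<Longrightarrow> (A - s) * dist x y \<le> dist (\<phi> x) (\<phi> y) \<and> dist (\<phi> x) (\<phi> y) \<le> (B + s) * dist x y"
proof -
  obtain \<delta> where \<delta>: "0 < \<delta>" "\<And>x y. x \<in> M \<Longrightarrow> y \<in> M \<Longrightarrow> x \<noteq> y \<Longrightarrow> \<delta> \<le> dist x y"
    using finite_separated[OF \<open>finite M\<close>] by blast
  define t where "t = C / (s * \<delta>) + 1"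
  have "0 < t"
    unfolding t_def using assms(2,5) \<delta>(1) by (simp add: add_nonneg_pos)
  have "C / t \<le> s * \<delta>"
    using \<open>0 < t\<close> assms(2,5) \<delta>(1) unfolding t_def by (simp add: field_simps)
  define \<phi> where "\<phi> x = (1 / t) *\<^sub>R (f (t *\<^sub>R x) - f 0)" for x
  have \<phi>_eq: "\<And>x. \<phi> x = (1 / t) *\<^sub>R (f (t *\<^sub>R x) - f 0)"
    by (simp add: \<phi>_def)
  have "(A - s) * dist x y \<le> dist (\<phi> x) (\<phi> y) \<and> dist (\<phi> x) (\<phi> y) \<le> (B + s) * dist x y"
    if "x \<in> M" "y \<in> M" for x y
  proof (cases "x = y")
    case False
    then have small: "C / t \<le> s * dist x y"
      using \<delta>(2)[OF that False] \<open>C / t \<le> s * \<delta>\<close> assms(5) by (meson less_imp_le mult_left_mono order_trans)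
    have "(A - s) * dist x y = A * dist x y - s * dist x y"
      by (simp add: algebra_simps)
    also have "\<dots> \<le> A * dist x y - C / t"
      using small by simp
    also have "\<dots> \<le> dist (\<phi> x) (\<phi> y)"
      by (rule coarse_rescale_dist_bounds(1)[OF coarse \<open>0 < t\<close> \<phi>_eq])
    finally have "(A - s) * dist x y \<le> dist (\<phi> x) (\<phi> y)" .
    have "dist (\<phi> x) (\<phi> y) \<le> B * dist x y + C / t"
      by (rule coarse_rescale_dist_bounds(2)[OF coarse \<open>0 < t\<close> \<phi>_eq])
    also have "\<dots> \<le> B * dist x y + s * dist x y"
      using small by simp
    also have "\<dots> = (B + s) * dist x y"
      by (simp add: algebra_simps)
    finally show ?thesis
      using \<open>(A - s) * dist x y \<le> dist (\<phi> x) (\<phi> y)\<close> by blast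
  qed simp
  moreover have "\<phi> 0 = 0"
    by (simp add: \<phi>_def)
  ultimately show ?thesis
    using that by blast
qed

section \<open>Approximation of finite-dimensional subspaces\<close>

lemma dirac_sum_Sigma:
  assumes "finite I" "\<And>i. i \<in> I \<Longrightarrow> finite (J i)"
  shows "dirac_sum (Sigma I J) (\<lambda>k. a (fst k) (snd k) * c (fst k)) (\<lambda>k. y (fst k) (snd k))
    = (\<lambda>g. \<Sum>i\<in>I. c i * dirac_sum (J i) (a i) (y i) g)"
proof
  fix g
  have "dirac_sum (Sigma I J) (\<lambda>k. a (fst k) (snd k) * c (fst k)) (\<lambda>k. y (fst k) (snd k)) g
      = (\<Sum>(i, j)\<in>Sigma I J. a i j * c i * dirac (y i j) g)"
    by (simp add: dirac_sum_def split_def)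
  also have "\<dots> = (\<Sum>i\<in>I. \<Sum>j\<in>J i. a i j * c i * dirac (y i j) g)"
    by (rule sum.Sigma[symmetric]) (use assms in auto)
  also have "\<dots> = (\<Sum>i\<in>I. c i * dirac_sum (J i) (a i) (y i) g)"
    by (simp add: dirac_sum_def sum_distrib_left ac_simps)
  finally show "dirac_sum (Sigma I J) (\<lambda>k. a (fst k) (snd k) * c (fst k)) (\<lambda>k. y (fst k) (snd k)) g
      = (\<Sum>i\<in>I. c i * dirac_sum (J i) (a i) (y i) g)" .
qed

lemma dnorm_coordinate_perturbation_le:
  fixes e :: "('a::real_normed_vector \<Rightarrow> real) \<Rightarrow> real"
  assumes "e \<in> dual_Lip0" "\<forall>g\<in>Lip0. e g = (\<Sum>i<n. L i e * u i g)"
    and "\<forall>i<n. u i \<in> dual_Lip0 \<and> d i \<in> dual_Lip0"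
    and "\<forall>i<n. \<bar>L i e\<bar> \<le> K i * dnorm e \<and> dnorm (\<lambda>g. u i g - d i g) \<le> \<eta>"
    and "(\<Sum>i<n. K i) * \<eta> \<le> s"
  shows "dnorm (\<lambda>g. e g - (\<Sum>i<n. L i e * d i g)) \<le> s * dnorm e"
proof -
  have diff_dual: "(\<lambda>g. u i g - d i g) \<in> dual_Lip0" if "i < n" for i
    using dual_Lip0_lincomb_closed[of "u i" "d i" 1 "- 1"] assms(3) that by simp
  have eq: "(\<lambda>g. e g - (\<Sum>i<n. L i e * d i g)) = (\<lambda>g. \<Sum>i<n. L i e * (u i g - d i g))"
  proof
    fix g
    show "e g - (\<Sum>i<n. L i e * d i g) = (\<Sum>i<n. L i e * (u i g - d i g))"
    proof (cases "g \<in> Lip0")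
      case True
      then show ?thesis
        using assms(2) by (simp add: right_diff_distrib sum_subtractf)
    next
      case False
      then show ?thesis
        using assms(1,3) by (simp add: dual_Lip0_outside)
    qed
  qed
  have "dnorm (\<lambda>g. e g - (\<Sum>i<n. L i e * d i g)) \<le> (\<Sum>i<n. \<bar>L i e\<bar> * dnorm (\<lambda>g. u i g - d i g))"
    unfolding eq using diff_dual by (intro dnorm_sum_le) auto
  also have "\<dots> \<le> (\<Sum>i<n. K i * dnorm e * \<eta>)"
    using assms(4) diff_dual dnorm_nonneg
    by (intro sum_mono mult_mono) (auto intro: order_trans[OF abs_ge_zero])
  also have "\<dots> = (\<Sum>i<n. K i) * (dnorm e * \<eta>)"
    by (simp add: sum_distrib_right mult.assoc)
  also have "\<dots> = ((\<Sum>i<n. K i) * \<eta>) * dnorm e"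
    by (simp add: ac_simps)
  also have "\<dots> \<le> s * dnorm e"
    using assms(5) dnorm_nonneg[OF assms(1)] by (rule mult_right_mono)
  finally show ?thesis .
qed

lemma fspan_approx_dirac_sums:
  fixes V :: "(('a::real_normed_vector \<Rightarrow> real) \<Rightarrow> real) set"
  assumes "finite V" "V \<subseteq> free_space TYPE('a)" "0 < s"
  obtains K :: "(nat \<times> nat) set" and c and x :: "nat \<times> nat \<Rightarrow> 'a" where "finite K"
    "\<And>k. k \<in> K \<Longrightarrow> bounded_linear_functional (c k)"
    "\<And>e. e \<in> fspan V \<Longrightarrow> \<bar>dnorm e - dnorm (dirac_sum K (\<lambda>k. c k e) x)\<bar> \<le> s * dnorm e"
proof -
  obtain n bb L where "bounded_coordinates V n bb L"
    using finite_imp_bounded_coordinates[OF assms(1)] by blast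
  then have coords: "\<forall>i<n. bb i \<in> V \<and> bounded_linear_functional (L i)"
    and expand: "\<forall>e\<in>fspan V. \<forall>g\<in>Lip0. e g = (\<Sum>i<n. L i e * bb i g)"
    unfolding bounded_coordinates_def by blast+
  have "\<forall>i\<in>{..<n}. \<exists>K. 0 \<le> K \<and> (\<forall>e\<in>dual_Lip0. \<bar>L i e\<bar> \<le> K * dnorm e)"
    using coords unfolding bounded_linear_functional_def by blast
  then obtain Kb where Kb: "\<forall>i\<in>{..<n}. 0 \<le> Kb i \<and> (\<forall>e\<in>dual_Lip0. \<bar>L i e\<bar> \<le> Kb i * dnorm e)"
    unfolding bchoice_iff by blast
  define \<eta> where "\<eta> = s / ((\<Sum>i<n. Kb i) + 1)"
  have "0 \<le> (\<Sum>i<n. Kb i)"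
    using Kb by (intro sum_nonneg) auto
  then have "0 < \<eta>" "(\<Sum>i<n. Kb i) * \<eta> \<le> s"
    using assms(3) by (auto simp: \<eta>_def field_simps)
  have "\<forall>i\<in>{..<n}. \<exists>m::nat. \<exists>a y. dnorm (\<lambda>g. bb i g - dirac_sum {..<m} a y g) < \<eta>"
    using free_space_approx[OF _ \<open>0 < \<eta>\<close>] coords assms(2) by blast
  then obtain m :: "nat \<Rightarrow> nat" and a and y :: "nat \<Rightarrow> nat \<Rightarrow> 'a"
    where approx: "\<forall>i\<in>{..<n}. dnorm (\<lambda>g. bb i g - dirac_sum {..<m i} (a i) (y i) g) < \<eta>"
    unfolding bchoice_iff by blast
  define K where "K = Sigma {..<n} (\<lambda>i. {..<m i})"
  define c where "c k e = a (fst k) (snd k) * L (fst k) e" for k e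
  define x where "x k = y (fst k) (snd k)" for k
  have close: "\<bar>dnorm e - dnorm (dirac_sum K (\<lambda>k. c k e) x)\<bar> \<le> s * dnorm e" if "e \<in> fspan V" for e
  proof -
    have "e \<in> dual_Lip0"
      using that assms(2) fspan_subset_dual_Lip0 free_space_subset_dual_Lip0 by blast
    have R_eq: "dirac_sum K (\<lambda>k. c k e) x = (\<lambda>g. \<Sum>i<n. L i e * dirac_sum {..<m i} (a i) (y i) g)"
      unfolding K_def c_def x_def by (rule dirac_sum_Sigma[where c = "\<lambda>i. L i e"]) auto
    have "dnorm (\<lambda>g. e g - (\<Sum>i<n. L i e * dirac_sum {..<m i} (a i) (y i) g)) \<le> s * dnorm e"
      using \<open>e \<in> dual_Lip0\<close> bspec[OF expand that] coords Kb approx assms(2) free_space_subset_dual_Lip0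
        \<open>(\<Sum>i<n. Kb i) * \<eta> \<le> s\<close>
      by (intro dnorm_coordinate_perturbation_le) (auto simp: dirac_sum_in_dual_Lip0 less_imp_le)
    with abs_dnorm_diff_le[OF \<open>e \<in> dual_Lip0\<close> dirac_sum_in_dual_Lip0, of K "\<lambda>k. c k e" x]
    show ?thesis
      unfolding R_eq by linarith
  qed
  have coeff: "bounded_linear_functional (c k)" if "k \<in> K" for k
    using coords that unfolding K_def c_def by (auto intro: bounded_linear_functional_scale)
  have "finite K"
    unfolding K_def by (intro finite_SigmaI) auto
  from that[OF this coeff close] show ?thesis .
qed

section \<open>Banach-Mazur distance of a linear image\<close>

lemma op_norm_on_le:
  assumes "(\<lambda>g. 0) \<in> E" "T (\<lambda>g. 0) = (\<lambda>h. 0)" "0 \<le> C"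
    and bound: "\<And>e. e \<in> E \<Longrightarrow> dnorm (T e) \<le> C * dnorm e"
  shows "0 \<le> op_norm_on E T" and "op_norm_on E T \<le> C"
proof -
  have le_C: "dnorm (T e) \<le> C" if "e \<in> E" "dnorm e \<le> 1" for e
  proof -
    have "dnorm (T e) \<le> C * dnorm e"
      using bound[OF that(1)] .
    also have "\<dots> \<le> C * 1"
      using that(2) \<open>0 \<le> C\<close> by (rule mult_left_mono)
    finally show ?thesis
      by simp
  qed
  have zero: "0 \<in> {dnorm (T e) |e. e \<in> E \<and> dnorm e \<le> 1}"
    using assms(1,2) by force
  have "bdd_above {dnorm (T e) |e. e \<in> E \<and> dnorm e \<le> 1}"
    using le_C by (auto intro!: bdd_aboveI[where M = C])
  then show "0 \<le> op_norm_on E T"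
    unfolding op_norm_on_def by (rule cSup_upper2[OF zero order_refl])
  show "op_norm_on E T \<le> C"
    unfolding op_norm_on_def using zero le_C by (intro cSup_least) auto
qed

lemma bm_dist_le_op_norm:
  assumes "linear_on_set E T" "linear_on_set F S" "T ` E \<subseteq> F" "S ` F \<subseteq> E"
    "\<forall>e\<in>E. S (T e) = e" "\<forall>f\<in>F. T (S f) = f"
  shows "bm_dist E F \<le> ereal (op_norm_on E T * op_norm_on F S)"
  unfolding bm_dist_def using assms by (intro Inf_lower CollectI exI[of _ T] exI[of _ S]) simp

lemma inj_on_fspan_if_dnorm_ge:
  fixes T :: "(('a::real_normed_vector \<Rightarrow> real) \<Rightarrow> real) \<Rightarrow> (('b::real_normed_vector \<Rightarrow> real) \<Rightarrow> real)"
  assumes "B \<subseteq> dual_Lip0" "linear_on_set UNIV T" "0 < c"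
    and lower: "\<And>e. e \<in> fspan B \<Longrightarrow> c * dnorm e \<le> dnorm (T e)"
  shows "inj_on T (fspan B)"
proof (rule inj_onI)
  fix e1 e2
  assume e12: "e1 \<in> fspan B" "e2 \<in> fspan B" "T e1 = T e2"
  define e where "e = (\<lambda>g. 1 * e1 g + (- 1) * e2 g)"
  have "e \<in> fspan B"
    unfolding e_def using e12 by (intro fspan_lincomb)
  have "T e = (\<lambda>h. 1 * T e1 h + (- 1) * T e2 h)"
    unfolding e_def by (rule linear_on_set_UNIV_D[OF assms(2)])
  then have "c * dnorm e \<le> 0"
    using lower[OF \<open>e \<in> fspan B\<close>] e12(3) by simp
  then have "e = (\<lambda>g. 0)"
    using \<open>0 < c\<close> \<open>e \<in> fspan B\<close> fspan_subset_dual_Lip0[OF assms(1)]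
    by (auto intro!: dnorm_le_0_imp_zero simp: mult_le_0_iff)
  show "e1 = e2"
  proof
    fix g
    show "e1 g = e2 g"
      using fun_cong[OF \<open>e = (\<lambda>g. 0)\<close>, of g] by (simp add: e_def)
  qed
qed

lemma linear_on_set_inv_into_fspan:
  assumes "linear_on_set UNIV T" "inj_on T (fspan B)"
  shows "linear_on_set (T ` fspan B) (inv_into (fspan B) T)"
  unfolding linear_on_set_def
proof (intro ballI allI)
  fix u v c a
  assume "u \<in> T ` fspan B" "v \<in> T ` fspan B"
  then obtain e1 e2 where e: "e1 \<in> fspan B" "e2 \<in> fspan B" "u = T e1" "v = T e2"
    by blast
  have "fadd (fscale c e1) (fscale a e2) \<in> fspan B"
    unfolding fadd_def fscale_def using e by (intro fspan_lincomb)
  moreover have "T (fadd (fscale c e1) (fscale a e2)) = fadd (fscale c u) (fscale a v)"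
    unfolding fadd_def fscale_def e(3,4) by (rule linear_on_set_UNIV_D[OF assms(1)])
  ultimately show "inv_into (fspan B) T (fadd (fscale c u) (fscale a v))
      = fadd (fscale c (inv_into (fspan B) T u)) (fscale a (inv_into (fspan B) T v))"
    using inv_into_f_f[OF assms(2)] e by metis
qed

lemma bm_dist_linear_image_le:
  fixes T :: "(('a::real_normed_vector \<Rightarrow> real) \<Rightarrow> real) \<Rightarrow> (('b::real_normed_vector \<Rightarrow> real) \<Rightarrow> real)"
  assumes "B \<subseteq> dual_Lip0" "linear_on_set UNIV T" "0 < c" "0 \<le> C"
    and bounds: "\<And>e. e \<in> fspan B \<Longrightarrow> c * dnorm e \<le> dnorm (T e) \<and> dnorm (T e) \<le> C * dnorm e"
  shows "bm_dist (fspan B) (T ` fspan B) \<le> ereal (C / c)"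
proof -
  define S where "S = inv_into (fspan B) T"
  have inj: "inj_on T (fspan B)"
    using bounds by (intro inj_on_fspan_if_dnorm_ge[OF assms(1-3)]) auto
  then have S_T: "\<forall>e\<in>fspan B. S (T e) = e"
    unfolding S_def by simp
  have T0: "T (\<lambda>g. 0) = (\<lambda>h. 0)"
    using linear_on_set_zero[OF assms(2)] .
  have T_norm: "op_norm_on (fspan B) T \<le> C"
    using bounds fspan_zero T0 \<open>0 \<le> C\<close> by (intro op_norm_on_le(2)) auto
  have S_bound: "dnorm (S f) \<le> (1 / c) * dnorm f" if "f \<in> T ` fspan B" for f
    using that S_T bounds \<open>0 < c\<close> by (auto simp: field_simps)
  have S0: "S (\<lambda>h. 0) = (\<lambda>g. 0)"
    using S_T fspan_zero T0 by metis
  have "(\<lambda>h. 0) \<in> T ` fspan B"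
    by (rule image_eqI[where x = "\<lambda>g. 0"]) (simp_all add: T0 fspan_zero)
  from op_norm_on_le[OF this S0 _ S_bound] \<open>0 < c\<close>
  have "0 \<le> op_norm_on (T ` fspan B) S" "op_norm_on (T ` fspan B) S \<le> 1 / c"
    by auto
  with T_norm have "op_norm_on (fspan B) T * op_norm_on (T ` fspan B) S \<le> C * (1 / c)"
    using \<open>0 \<le> C\<close> by (intro mult_mono) auto
  moreover have "bm_dist (fspan B) (T ` fspan B) \<le> ereal (op_norm_on (fspan B) T * op_norm_on (T ` fspan B) S)"
    using assms(2) linear_on_set_inv_into_fspan[OF assms(2) inj] S_T
    unfolding S_def by (intro bm_dist_le_op_norm) (auto simp: linear_on_set_def inv_into_into f_inv_into_f)
  ultimately show ?thesis
    by (simp add: order_trans)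
qed

lemma distortion_compose_bounds:
  fixes a r t s A B :: real
  assumes "\<bar>a - r\<bar> \<le> s * a" "(A - s) * r \<le> t" "t \<le> (B + s) * r" "s < A" "0 \<le> B + s"
  shows "(A - s) * (1 - s) * a \<le> t \<and> t \<le> (B + s) * (1 + s) * a"
proof -
  have r: "(1 - s) * a \<le> r" "r \<le> (1 + s) * a"
    using assms(1) by (auto simp: abs_le_iff algebra_simps)
  have "(A - s) * (1 - s) * a = (A - s) * ((1 - s) * a)"
    by simp
  also have "\<dots> \<le> (A - s) * r"
    using r(1) assms(4) by (intro mult_left_mono) auto
  also have "\<dots> \<le> t"
    by (rule assms(2))
  finally have "(A - s) * (1 - s) * a \<le> t" .
  moreover have "(B + s) * r \<le> (B + s) * ((1 + s) * a)"
    using r(2) assms(5) by (rule mult_left_mono)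
  then have "t \<le> (B + s) * (1 + s) * a"
    using assms(3) by (simp add: mult.assoc)
  ultimately show ?thesis
    by blast
qed

lemma coarse_embedding_fspan_bm_dist_le:
  fixes f :: "'a::real_normed_vector \<Rightarrow> 'b::real_normed_vector" and V :: "(('a \<Rightarrow> real) \<Rightarrow> real) set"
  assumes "0 < A" "0 < B" "0 \<le> C"
    and coarse: "\<forall>x y. A * norm (x - y) - C \<le> norm (f x - f y) \<and> norm (f x - f y) \<le> B * norm (x - y) + C"
    and "finite V" "V \<subseteq> free_space TYPE('a)" "0 < s" "s < A" "s < 1"
  shows "\<exists>F. fd_subspace_of F (free_space TYPE('b)) \<and>
    bm_dist (fspan V) F \<le> ereal ((B + s) * (1 + s) / ((A - s) * (1 - s)))"
proof -
  obtain K :: "(nat \<times> nat) set" and c and x :: "nat \<times> nat \<Rightarrow> 'a"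
    where K: "finite K" "\<And>k. k \<in> K \<Longrightarrow> bounded_linear_functional (c k)"
    and approx: "\<And>e. e \<in> fspan V \<Longrightarrow> \<bar>dnorm e - dnorm (dirac_sum K (\<lambda>k. c k e) x)\<bar> \<le> s * dnorm e"
    using fspan_approx_dirac_sums[OF assms(5-7)] by blast
  obtain \<phi> :: "'a \<Rightarrow> 'b" where \<phi>: "\<phi> 0 = 0"
    "\<And>u v. u \<in> insert 0 (x ` K) \<Longrightarrow> v \<in> insert 0 (x ` K) \<Longrightarrow>
       (A - s) * dist u v \<le> dist (\<phi> u) (\<phi> v) \<and> dist (\<phi> u) (\<phi> v) \<le> (B + s) * dist u v"
    using coarse_embedding_rescale_on_finite[OF assms(1,3) coarse finite.insertI[OF finite_imageI[OF K(1)]] assms(7)]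
    by blast
  have lip: "(B + s)-lipschitz_on (insert 0 (x ` K)) \<phi>"
    using \<phi>(2) assms(2,7) by (intro lipschitz_onI) auto
  define T where "T e = dirac_sum K (\<lambda>k. c k e) (\<phi> \<circ> x)" for e
  have lin: "linear_on_set UNIV T"
    unfolding T_def using K(2) by (intro linear_on_set_dirac_sum_coeffs) (simp add: bounded_linear_functional_def)
  have "(A - s) * (1 - s) * dnorm e \<le> dnorm (T e) \<and> dnorm (T e) \<le> (B + s) * (1 + s) * dnorm e"
    if "e \<in> fspan V" for e
  proof (rule distortion_compose_bounds[OF approx[OF that]])
    show "(A - s) * dnorm (dirac_sum K (\<lambda>k. c k e) x) \<le> dnorm (T e)"
      unfolding T_def using K(1) \<phi> assms(8) by (intro dnorm_dirac_sum_comp_ge) auto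
    show "dnorm (T e) \<le> (B + s) * dnorm (dirac_sum K (\<lambda>k. c k e) x)"
      unfolding T_def by (rule dnorm_dirac_sum_comp_le[OF K(1) lip \<phi>(1)])
  qed (use assms(2,7,8) in auto)
  then have "bm_dist (fspan V) (T ` fspan V) \<le> ereal ((B + s) * (1 + s) / ((A - s) * (1 - s)))"
    using assms(2,6-9) free_space_subset_dual_Lip0 by (intro bm_dist_linear_image_le lin) auto
  moreover have "fd_subspace_of (T ` fspan V) (free_space TYPE('b))"
  proof -
    have "T ` fspan V \<subseteq> free_space TYPE('b)"
      unfolding T_def using dirac_sum_in_free_space[OF K(1)] by auto
    moreover have "finite (T ` V)"
      using assms(5) by simp
    ultimately show ?thesis
      unfolding fd_subspace_of_def image_fspan_linear[OF lin] by blast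
  qed
  ultimately show ?thesis
    by blast
qed

lemma eventually_distortion_lt:
  fixes A B \<epsilon> :: real
  assumes "0 < A" "0 < \<epsilon>"
  shows "\<forall>\<^sub>F s in at_right 0. 0 < s \<and> s < A \<and> s < 1 \<and> (B + s) * (1 + s) / ((A - s) * (1 - s)) < B / A + \<epsilon>"
proof -
  have "((\<lambda>s. (B + s) * (1 + s) / ((A - s) * (1 - s))) \<longlongrightarrow> (B + 0) * (1 + 0) / ((A - 0) * (1 - 0))) (at_right 0)"
    using assms(1) by (intro tendsto_intros) auto
  then have "\<forall>\<^sub>F s in at_right 0. (B + s) * (1 + s) / ((A - s) * (1 - s)) < B / A + \<epsilon>"
    using assms(2) by (intro order_tendstoD(2)) auto
  moreover have "\<forall>\<^sub>F s in at_right 0. 0 < s \<and> s < A \<and> s < (1::real)"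
    unfolding eventually_at_right_field using assms(1) by (intro exI[of _ "min A 1"]) auto
  ultimately show ?thesis
    by eventually_elim auto
qed

lemma coarse_embedding_fd_subspace_bm_dist_le:
  fixes f :: "'a::real_normed_vector \<Rightarrow> 'b::real_normed_vector"
  assumes "0 < A" "0 < B" "0 \<le> C"
    and coarse: "\<forall>x y. A * norm (x - y) - C \<le> norm (f x - f y) \<and> norm (f x - f y) \<le> B * norm (x - y) + C"
    and E: "fd_subspace_of E (free_space TYPE('a))" and "0 < \<epsilon>"
  shows "\<exists>F. fd_subspace_of F (free_space TYPE('b)) \<and> bm_dist E F \<le> ereal (B / A + \<epsilon>)"
proof -
  obtain V where V: "finite V" "E = fspan V"
    using E unfolding fd_subspace_of_def by blast
  then have "V \<subseteq> free_space TYPE('a)"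
    using E fspan_superset[of V] unfolding fd_subspace_of_def by auto
  obtain s where s: "0 < s" "s < A" "s < 1" "(B + s) * (1 + s) / ((A - s) * (1 - s)) < B / A + \<epsilon>"
    using eventually_happens'[OF _ eventually_distortion_lt[OF assms(1) \<open>0 < \<epsilon>\<close>]] by auto
  obtain F where "fd_subspace_of F (free_space TYPE('b))"
    "bm_dist E F \<le> ereal ((B + s) * (1 + s) / ((A - s) * (1 - s)))"
    using coarse_embedding_fspan_bm_dist_le[OF assms(1-3) coarse V(1) \<open>V \<subseteq> free_space TYPE('a)\<close> s(1-3)] V(2)
    by blast
  with s(4) show ?thesis
    by (meson ereal_less_eq(3) less_imp_le order_trans)
qed

theorem corollary4p10:
  assumes "coarse_lipschitz_embeds TYPE('a::banach) TYPE('b::banach)"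
  shows "crudely_fin_rep (free_space TYPE('a)) (free_space TYPE('b))"
proof -
  obtain f :: "'a \<Rightarrow> 'b" and A B C where co: "0 < A" "0 < B" "0 \<le> C"
    "\<forall>x y. A * norm (x - y) - C \<le> norm (f x - f y) \<and> norm (f x - f y) \<le> B * norm (x - y) + C"
    using assms unfolding coarse_lipschitz_embeds_def by blast
  have "\<exists>F. fd_subspace_of F (free_space TYPE('b)) \<and> bm_dist E F \<le> ereal (max 1 (B / A) + \<epsilon>)"
    if E: "fd_subspace_of E (free_space TYPE('a))" and "0 < \<epsilon>" for E \<epsilon>
  proof -
    obtain F where "fd_subspace_of F (free_space TYPE('b))" "bm_dist E F \<le> ereal (B / A + \<epsilon>)"
      using coarse_embedding_fd_subspace_bm_dist_le[OF co E \<open>0 < \<epsilon>\<close>] by blast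
    moreover have "ereal (B / A + \<epsilon>) \<le> ereal (max 1 (B / A) + \<epsilon>)"
      by simp
    ultimately show ?thesis
      using order_trans by blast
  qed
  then show ?thesis
    unfolding crudely_fin_rep_def by (intro exI[of _ "max 1 (B / A)"]) auto
qed

end
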